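(* For integers $k\ge 1$, $n\ge 0$ and $j\in\{-1,0,1\}$ let $$h_{n,k}(j)=\sum _{i=0}^n (-1)^{i-1+j} \binom{n}{i} F_{i-j} (k+1)^{n-i}.$$ Then for all integers $k,n\ge 1$ and $m\ge 1$ the following identities hold (writing $h_{t}(j)$ for $h_{t,k}(j)$): (1) $h_{n}(1) (h_{m}(1) h_{n}(1) - h_{m+n}(1)) + h_{n}(0)^2 h_{m}(-1)=h_{n}(0) (h_{m+n}(0) - 2 h_{m}(0) h_{n}(1))$; (2) $h_{m+n}(0) (h_{n}(1) + h_{n}(-1))= 2 h_{m}(0) (h_{n}(0)^2 + h_{n}(1) h_{n}(-1)) + h_{n}(0) (2 h_{m}(1) h_{n}(1) - h_{m+n}(1) + 2 h_{m}(-1) h_{n}(-1) - h_{m+n}(-1))$; (3) $h_{n}(0)^2 h_{m}(1) + h_{n}(-1) (h_{m}(-1) h_{n}(-1) - h_{m+n}(-1))= h_{n}(0) (h_{m+n}(0) - 2 h_{m}(0) h_{n}(-1))$; (4) $h_{n+1}(0)^2 + h_{n+1}(1)^2= h_{n}(0)^2 (1+(1+k)^2) + (1+k)^2 h_{n}(1)^2 + h_{n}(-1)^2 + 2(1+k) h_{n}(0)(h_{n}(1) + h_{n}(-1))$; (5) $h_{n}(1)^3 = h_{n}(0) h_{2n}(0) + h_{n}(1) h_{2n}(1) - h_{n}(0)^2 (2 h_{n}(1) + h_{n}(-1))$; (6) $2 h_{n}(0)^3= h_{2n}(0) (h_{n}(1) + h_{n}(-1)) + h_{n}(0) (-2 h_{n}(1)^2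 + h_{2n}(1) - 2 h_{n}(1) h_{n}(-1) - 2 h_{n}(-1)^2 + h_{2n}(-1))$; (7) $h_{n}(1)^2 h_{2n}(1)= h_{n}(0)^4 + h_{n}(1)^4 - h_{n}(0) h_{2n}(0) (h_{n}(1) + h_{n}(-1)) + h_{n}(0)^2 (3 h_{n}(1)^2- h_{2n}(1) + 2 h_{n}(1) h_{n}(-1) + h_{n}(-1)^2)$; (8) $2 h_{n}(0)^2 h_{2n}(0)= 4 h_{n}(0)^3 (h_{n}(1) + h_{n}(-1)) - h_{2n}(0) (h_{n}(1)^2 + h_{n}(-1)^2) + h_{n}(0) (h_{n}(1) + h_{n}(-1)) (2 h_{n}(1)^2 - h_{2n}(1) + 2 h_{n}(-1)^2 - h_{2n}(-1))$; (9) $h_{n}(1)^3 + h_{3n}(1) + h_{n}(0)^2 (2 h_{n}(1) + h_{n}(-1))=2 (h_{n}(0) h_{2n}(0) + h_{n}(1) h_{2n}(1))$; (10) $h_{2n}(0) (h_{n}(1) + h_{n}(-1))= h_{n}(0)^3 + h_{3n}(0) + h_{n}(0) (h_{n}(1)^2 - h_{2n}(1) + h_{n}(1) h_{n}(-1) + h_{n}(-1)^2 - h_{2n}(-1))$; (11) $h_{n}(1) ( 2 h_{n}(1) h_{2n}(1)-h_{n}(1)^3 - h_{3n}(1))= h_{n}(0)^4 + h_{n}(0)\big(h_{3n}(0) - h_{2n}(0) (3 h_{n}(1) + h_{n}(-1))\big) + h_{n}(0)^2 (3 h_{n}(1)^2 - h_{2n}(1) + 2 h_{n}(1) h_{n}(-1)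 + h_{n}(-1)^2 - h_{2n}(-1))$.
   Context: $F_k$ denotes the Fibonacci numbers, $F_0=0$, $F_1=1$, $F_k=F_{k-1}+F_{k-2}$, extended to negative indices by $F_{-k}=(-1)^{k+1}F_k$ (so $F_{-1}=1$, which is needed for the term $i=0$, $j=1$ in the definition of $h_{n,k}$). *)

theory Defs
  imports Main "HOL-Number_Theory.Fib"
begin

definition fibz :: "int \<Rightarrow> int" where
  "fibz t = (if t \<ge> 0 then int (fib (nat t))
             else (-1) ^ (nat (-t) + 1) * int (fib (nat (-t))))"

definition negone_pow :: "int \<Rightarrow> int" where
  "negone_pow e = (if even e then 1 else -1)"

definition h :: "int \<Rightarrow> nat \<Rightarrow> int \<Rightarrow> int" where
  "h k n j = (\<Sum>i=0..n. negone_pow (int i - 1 + j) * int (n choose i)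
                          * fibz (int i - j) * (k + 1) ^ (n - i))"

end

theory Submission
  imports Defs
begin

(* Summing the Fibonacci recurrence and Pascal's rule under the binomial sum gives
   h_n(j) = h_n(j-1) + h_n(j-2) and h_{n+1}(j) = (k+1) h_n(j) + h_n(j-1).  So everything is
   determined by y_n = h_n(0) and z_n = h_n(-1): we have h_n(1) = y_n + z_n, and
   y_n phi + z_n = (k + phi)^n in Z[phi] with phi^2 = phi + 1.  Multiplicativity of these
   powers yields addition formulas for y_{m+n} and z_{m+n}; substituting them turns each of
   the eleven identities into a polynomial identity in k, y_m, z_m, y_n, z_n. *)

lemma fibz_of_nat: "fibz (int u) = int (fib u)"
  by (simp add: fibz_def)

lemma fibz_uminus_of_nat: "fibz (- int u) = (-1) ^ (u + 1) * int (fib u)"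
  by (cases "u = 0") (simp_all add: fibz_def)

lemma fibz_add_two: "fibz (t + 2) = fibz (t + 1) + fibz t"
proof -
  consider "t \<ge> 0" | "t = -1" | "t \<le> -2" by linarith
  then show ?thesis
  proof cases
    case 1
    then obtain u where "t = int u" by (metis nonneg_int_cases)
    then show ?thesis
      using fibz_of_nat[of "u + 2"] fibz_of_nat[of "u + 1"] by (simp add: fibz_of_nat fib_plus_2 add.commute)
  next
    case 2
    then show ?thesis by (simp add: fibz_def)
  next
    case 3
    then obtain u where t: "t = - int (u + 2)" by (intro that[of "nat (- t - 2)"]) simp
    show ?thesis
      using fibz_uminus_of_nat[of "u + 2"] fibz_uminus_of_nat[of "u + 1"] fibz_uminus_of_nat[of u]
      by (simp add: t fib_plus_2 algebra_simps)
  qed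
qed

lemma binomial_sum_Suc:
  fixes a :: "nat \<Rightarrow> 'a::comm_semiring_1"
  shows "(\<Sum>i=0..Suc n. of_nat (Suc n choose i) * a i * c ^ (Suc n - i))
       = c * (\<Sum>i=0..n. of_nat (n choose i) * a i * c ^ (n - i))
         + (\<Sum>i=0..n. of_nat (n choose i) * a (Suc i) * c ^ (n - i))"
proof -
  have "c * (\<Sum>i=0..n. of_nat (n choose i) * a i * c ^ (n - i))
      = (\<Sum>i=0..Suc n. of_nat (n choose i) * a i * c ^ (Suc n - i))"
    by (simp add: sum_distrib_left Suc_diff_le binomial_eq_0 algebra_simps)
  also have "\<dots> = a 0 * c ^ Suc n + (\<Sum>i=0..n. of_nat (n choose Suc i) * a (Suc i) * c ^ (n - i))"
    by (subst sum.atLeast0_atMost_Suc_shift) simp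
  finally have shifted: "c * (\<Sum>i=0..n. of_nat (n choose i) * a i * c ^ (n - i))
      = a 0 * c ^ Suc n + (\<Sum>i=0..n. of_nat (n choose Suc i) * a (Suc i) * c ^ (n - i))" .
  have "(\<Sum>i=0..Suc n. of_nat (Suc n choose i) * a i * c ^ (Suc n - i))
      = a 0 * c ^ Suc n + (\<Sum>i=0..n. of_nat (n choose Suc i) * a (Suc i) * c ^ (n - i))
        + (\<Sum>i=0..n. of_nat (n choose i) * a (Suc i) * c ^ (n - i))"
    by (subst sum.atLeast0_atMost_Suc_shift) (simp add: sum.distrib algebra_simps)
  then show ?thesis
    unfolding shifted .
qed

definition h_coeff :: "int \<Rightarrow> nat \<Rightarrow> int" where
  "h_coeff j i = negone_pow (int i - 1 + j) * fibz (int i - j)"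

lemma h_eq_binomial_sum: "h k n j = (\<Sum>i=0..n. of_nat (n choose i) * h_coeff j i * (k + 1) ^ (n - i))"
  unfolding h_def h_coeff_def by (simp add: algebra_simps)

lemma h_coeff_Suc: "h_coeff j (Suc i) = h_coeff (j - 1) i"
  unfolding h_coeff_def by (simp add: negone_pow_def algebra_simps)

lemma h_coeff_fib_rec: "h_coeff j i = h_coeff (j - 1) i + h_coeff (j - 2) i"
  using fibz_add_two[of "int i - j"] unfolding h_coeff_def by (simp add: negone_pow_def algebra_simps)

lemma h_fib_rec: "h k n j = h k n (j - 1) + h k n (j - 2)"
  unfolding h_eq_binomial_sum h_coeff_fib_rec[of j] by (simp add: algebra_simps sum.distrib)

lemma h_Suc: "h k (Suc n) j = (k + 1) * h k n j + h k n (j - 1)"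
  unfolding h_eq_binomial_sum binomial_sum_Suc h_coeff_Suc ..

lemma h_one: "h k n 1 = h k n 0 + h k n (-1)"
  using h_fib_rec[of k n 1] by simp

lemma h_Suc_zero: "h k (Suc n) 0 = (k + 1) * h k n 0 + h k n (-1)"
  using h_Suc[of k n 0] by simp

lemma h_Suc_minus_one: "h k (Suc n) (-1) = k * h k n (-1) + h k n 0"
  using h_Suc[of k n "-1"] h_fib_rec[of k n 0] by (simp add: algebra_simps)

lemma h_0_zero: "h k 0 0 = 0"
  by (simp add: h_def fibz_def)

lemma h_0_minus_one: "h k 0 (-1) = 1"
  by (simp add: h_def fibz_def negone_pow_def)

lemma h_add:
  shows "h k (m + n) 0 = h k m 0 * h k n (-1) + h k m (-1) * h k n 0 + h k m 0 * h k n 0"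
    and "h k (m + n) (-1) = h k m (-1) * h k n (-1) + h k m 0 * h k n 0"
  by (induction m) (simp_all add: h_0_zero h_0_minus_one h_Suc_zero h_Suc_minus_one algebra_simps)

theorem proposition7p4:
  fixes k :: int and n m :: nat
  assumes "k \<ge> 1" and "n \<ge> 1" and "m \<ge> 1"
  defines "H \<equiv> h k"
  shows
   "(H n 1 * (H m 1 * H n 1 - H (m+n) 1) + (H n 0)^2 * H m (-1)
      = H n 0 * (H (m+n) 0 - 2 * H m 0 * H n 1)) \<and>
    (H (m+n) 0 * (H n 1 + H n (-1))
      = 2 * H m 0 * ((H n 0)^2 + H n 1 * H n (-1))
        + H n 0 * (2 * H m 1 * H n 1 - H (m+n) 1 + 2 * H m (-1) * H n (-1) - H (m+n) (-1))) \<and>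
    ((H n 0)^2 * H m 1 + H n (-1) * (H m (-1) * H n (-1) - H (m+n) (-1))
      = H n 0 * (H (m+n) 0 - 2 * H m 0 * H n (-1))) \<and>
    ((H (n+1) 0)^2 + (H (n+1) 1)^2
      = (H n 0)^2 * (1 + (1+k)^2) + (1+k)^2 * (H n 1)^2 + (H n (-1))^2
        + 2 * (1+k) * H n 0 * (H n 1 + H n (-1))) \<and>
    ((H n 1)^3 = H n 0 * H (2*n) 0 + H n 1 * H (2*n) 1 - (H n 0)^2 * (2 * H n 1 + H n (-1))) \<and>
    (2 * (H n 0)^3
      = H (2*n) 0 * (H n 1 + H n (-1))
        + H n 0 * (- 2 * (H n 1)^2 + H (2*n) 1 - 2 * H n 1 * H n (-1) - 2 * (H n (-1))^2 + H (2*n) (-1))) \<and>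
    ((H n 1)^2 * H (2*n) 1
      = (H n 0)^4 + (H n 1)^4 - H n 0 * H (2*n) 0 * (H n 1 + H n (-1))
        + (H n 0)^2 * (3 * (H n 1)^2 - H (2*n) 1 + 2 * H n 1 * H n (-1) + (H n (-1))^2)) \<and>
    (2 * (H n 0)^2 * H (2*n) 0
      = 4 * (H n 0)^3 * (H n 1 + H n (-1)) - H (2*n) 0 * ((H n 1)^2 + (H n (-1))^2)
        + H n 0 * (H n 1 + H n (-1)) * (2 * (H n 1)^2 - H (2*n) 1 + 2 * (H n (-1))^2 - H (2*n) (-1))) \<and>
    ((H n 1)^3 + H (3*n) 1 + (H n 0)^2 * (2 * H n 1 + H n (-1))
      = 2 * (H n 0 * H (2*n) 0 + H n 1 * H (2*n) 1)) \<and>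
    (H (2*n) 0 * (H n 1 + H n (-1))
      = (H n 0)^3 + H (3*n) 0
        + H n 0 * ((H n 1)^2 - H (2*n) 1 + H n 1 * H n (-1) + (H n (-1))^2 - H (2*n) (-1))) \<and>
    (H n 1 * (2 * H n 1 * H (2*n) 1 - (H n 1)^3 - H (3*n) 1)
      = (H n 0)^4 + H n 0 * (H (3*n) 0 - H (2*n) 0 * (3 * H n 1 + H n (-1)))
        + (H n 0)^2 * (3 * (H n 1)^2 - H (2*n) 1 + 2 * H n 1 * H n (-1) + (H n (-1))^2 - H (2*n) (-1)))"
proof -
  \<comment> \<open>The identities hold for all k, m, n.\<close>
  have multiples: "2 * n = n + n" "3 * n = n + n + n" "n + 1 = Suc n" by simp_all
  show ?thesis
    unfolding H_def h_one multiples
    by (simp only: h_Suc_zero h_Suc_minus_one h_add)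
      (simp add: algebra_simps power2_eq_square power3_eq_cube power4_eq_xxxx)
qed

end
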